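(* Let $\mathcal{J}=\langle U,g,f\rangle$ satisfy the standing assumptions below, and let $(\theta^k)_{k\ge1}$ be a sequence of evaluations satisfying the long-term condition. Then for all $T_0\geq0$ and all $y_0\in\mathbb{R}^d$, $$\limsup_k V_{\theta^k}(y_0)=\limsup_k\inf_{t\leq T_0}V_{\mathcal{T}_t\sharp\theta^k}(y_0).$$ In particular, for all $T_0\ge0$ and $y_0\in\mathbb{R}^d$, $\limsup_k V_{\theta^k}(y_0)\leq\sup_{k\in\mathbb{N}^*}\inf_{t\leq T_0}V_{\mathcal{T}_t\sharp\theta^k}(y_0)$.
   Context: Setting: $U$ is a metric space, $g:\mathbb{R}^d\times U\to[0,1]$ is Borel measurable, $f:\mathbb{R}^d\times U\to\mathbb{R}^d$ is Borel measurable with $\|f(y,u)-f(\bar y,u)\|\leq L\|y-\bar y\|$ and $\|f(y,u)\|\leq a(1+\|y\|)$ for constants $L\ge0,a>0$. $\mathcal{U}$ is the set of measurable controls $u:[0,+\infty)\to U$; $y(t,u,y_0)$ is the solution of $y'=f(y,u)$, $y(0)=y_0$. For an evaluation $\theta\in\Delta(\mathbb{R}_+)$, $V_\theta(y_0)=\inf_{u\in\mathcal{U}}\int_{[0,+\infty)} g(y(s,u,y_0),u(s))\,d\theta(s)$ and $V_{\mathcal{T}_t\sharp\theta}(y_0)=\inf_{u\in\mathcal{U}}\int_{[0,+\infty)} g(y(s+t,u,y_0),u(s+t))\,d\theta(s)$ ($t$ ranging over $[0,T_0]$). $TV_s(\theta)=\sup_{Q\in\mathcal{B}(\mathbb{R}_+)}|\theta(Q)-\theta(Q+s)|$;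 $(\theta^k)$ satisfies the long-term condition if $\sup_{0\le s\le S}TV_s(\theta^k)\to0$ as $k\to\infty$ for every $S>0$. *)

theory Defs
  imports "HOL-Analysis.Analysis" "HOL-Probability.Probability"
begin

definition standing_assumptions ::
  "('a::euclidean_space \<Rightarrow> 'u::metric_space \<Rightarrow> real) \<Rightarrow> ('a \<Rightarrow> 'u \<Rightarrow> 'a) \<Rightarrow> real \<Rightarrow> real \<Rightarrow> bool" where
  "standing_assumptions g f L a \<longleftrightarrow>
     (\<lambda>(y, u). g y u) \<in> borel_measurable borel \<and>
     (\<forall>y u. 0 \<le> g y u \<and> g y u \<le> 1) \<and>
     (\<lambda>(y, u). f y u) \<in> borel_measurable borel \<and>
     L \<ge> 0 \<and> a > 0 \<and>
     (\<forall>y y' u. norm (f y u - f y' u) \<le> L * norm (y - y')) \<and>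
     (\<forall>y u. norm (f y u) \<le> a * (1 + norm y))"

text \<open>Measurable controls u : [0,+\<infinity>) \<rightarrow> U (values at negative times are irrelevant).\<close>
definition controls :: "(real \<Rightarrow> 'u::metric_space) set" where
  "controls = {u. u \<in> borel_measurable (restrict_space borel {0..})}"

definition is_traj :: "('a::euclidean_space \<Rightarrow> 'u \<Rightarrow> 'a) \<Rightarrow> (real \<Rightarrow> 'u) \<Rightarrow> 'a \<Rightarrow> (real \<Rightarrow> 'a) \<Rightarrow> bool" where
  "is_traj f u y0 y \<longleftrightarrow>
     (\<forall>t\<ge>0. (\<lambda>s. f (y s) (u s)) integrable_on {0..t} \<and>
             y t = y0 + integral {0..t} (\<lambda>s. f (y s) (u s)))"

definition traj :: "('a::euclidean_space \<Rightarrow> 'u \<Rightarrow> 'a) \<Rightarrow> (real \<Rightarrow> 'u) \<Rightarrow> 'a \<Rightarrow> real \<Rightarrow> 'a" where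
  "traj f u y0 = (THE y. is_traj f u y0 y \<and> (\<forall>t<0. y t = y0))"

definition evaluation :: "real measure \<Rightarrow> bool" where
  "evaluation \<theta> \<longleftrightarrow> prob_space \<theta> \<and> space \<theta> = {0..} \<and>
     sets \<theta> = sets (restrict_space borel {0..})"

definition Val :: "('a::euclidean_space \<Rightarrow> 'u::metric_space \<Rightarrow> real) \<Rightarrow> ('a \<Rightarrow> 'u \<Rightarrow> 'a)
     \<Rightarrow> real measure \<Rightarrow> 'a \<Rightarrow> real" where
  "Val g f \<theta> y0 = (INF u\<in>controls. \<integral>s. g (traj f u y0 s) (u s) \<partial>\<theta>)"

definition Val_shift :: "('a::euclidean_space \<Rightarrow> 'u::metric_space \<Rightarrow> real) \<Rightarrow> ('a \<Rightarrow> 'u \<Rightarrow> 'a)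
     \<Rightarrow> real measure \<Rightarrow> real \<Rightarrow> 'a \<Rightarrow> real" where
  "Val_shift g f \<theta> t y0 = (INF u\<in>controls. \<integral>s. g (traj f u y0 (s + t)) (u (s + t)) \<partial>\<theta>)"

definition TV :: "real \<Rightarrow> real measure \<Rightarrow> real" where
  "TV s \<theta> = (SUP Q\<in>sets (restrict_space borel {0..}). \<bar>measure \<theta> Q - measure \<theta> ((\<lambda>x. x + s) ` Q)\<bar>)"

definition long_term_condition :: "(nat \<Rightarrow> real measure) \<Rightarrow> bool" where
  "long_term_condition \<theta> \<longleftrightarrow> (\<forall>S>0. (\<lambda>k. SUP s\<in>{0..S}. TV s (\<theta> k)) \<longlonglongrightarrow> 0)"

end

theory Submission
  imports Defs
begin

text \<open>Shifting an evaluation by t changes the cost of every control by at most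
  2 TV_t(\<theta>), because the running cost takes values in [0,1]: the mass of [0,t) is at most
  TV_t(\<theta>), every superlevel set of the cost loses at most TV_t(\<theta>) of its measure under
  the shift, and an integral of a [0,1]-valued function is recovered from the measures of its
  superlevel sets. Hence V_\<theta> \<le> inf_{t\<le>T0} V_{T_t#\<theta>} + 2 sup_{s\<le>T0} TV_s(\<theta>), while the
  reverse inequality holds trivially with t = 0; the long-term condition makes the gap vanish.\<close>

lemma card_grid_below_approx:
  fixes v :: real and n :: nat
  assumes "0 \<le> v" "v \<le> 1" "n > 0"
  shows "v - 1/n \<le> card {j\<in>{1..n}. j/n \<le> v} / n"
    and "card {j\<in>{1..n}. j/n \<le> v} / n \<le> v"
proof -
  define m where "m = nat \<lfloor>n * v\<rfloor>"
  have m: "real m \<le> n * v" "n * v < real m + 1"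
    using assms by (simp_all add: m_def)
  have "real n * v \<le> real n" using assms by (simp add: mult_left_le)
  then have "m \<le> n" using m(1) by linarith
  have grid: "real j / n \<le> v \<longleftrightarrow> j \<le> m" for j
  proof -
    have "real j / n \<le> v \<longleftrightarrow> real j \<le> n * v"
      using assms by (simp add: divide_le_eq mult.commute)
    also have "\<dots> \<longleftrightarrow> j \<le> m"
      using m by linarith
    finally show ?thesis .
  qed
  have "{j\<in>{1..n}. j/n \<le> v} = {1..m}"
    using \<open>m \<le> n\<close> by (auto simp only: grid atLeastAtMost_iff mem_Collect_eq)
  then have card: "card {j\<in>{1..n}. j/n \<le> v} = m" by simp
  have "v - 1/n = (n * v - 1) / n" using assms by (simp add: field_simps)
  also have "\<dots> \<le> m / n" using m by (simp add: divide_right_mono)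
  finally show "v - 1/n \<le> card {j\<in>{1..n}. j/n \<le> v} / n" unfolding card .
  show "card {j\<in>{1..n}. j/n \<le> v} / n \<le> v"
    unfolding card using m assms by (simp add: divide_le_eq mult.commute)
qed

lemma (in prob_space) integral_superlevel_grid_bounds:
  fixes f :: "'a \<Rightarrow> real" and n :: nat
  assumes [measurable]: "f \<in> borel_measurable M"
    and f01: "\<And>x. x \<in> space M \<Longrightarrow> 0 \<le> f x \<and> f x \<le> 1" and n: "n > 0"
  shows "expectation f - 1/n \<le> (\<Sum>j=1..n. prob {x\<in>space M. j/n \<le> f x}) / n"
    and "(\<Sum>j=1..n. prob {x\<in>space M. j/n \<le> f x}) / n \<le> expectation f"
proof -
  define S where "S j = {x\<in>space M. j/n \<le> f x}" for j :: nat
  define F where "F x = (\<Sum>j=1..n. indicator (S j) x) / n" for x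
  have S_sets: "S j \<in> events" for j
    unfolding S_def by measurable
  have F_card: "F x = card {j\<in>{1..n}. j/n \<le> f x} / n" if "x \<in> space M" for x
  proof -
    have "indicator (S j) x = (of_bool (j/n \<le> f x) :: real)" for j
      using that by (simp add: S_def indicator_def)
    then show ?thesis
      by (simp add: F_def Int_def conj_commute)
  qed
  have int_S: "integrable M (indicator (S j) :: 'a \<Rightarrow> real)" for j
    using S_sets by (auto intro!: integrable_real_indicator simp: less_top[symmetric])
  then have int_F: "integrable M F"
    unfolding F_def by (intro integrable_divide_zero integrable_sum) auto
  have "expectation F = (\<Sum>j=1..n. prob (S j)) / n"
    using int_S S_sets sets.sets_into_space by (simp add: F_def[abs_def] Int_absorb2)
  moreover have int_f: "integrable M f"
    using f01 by (intro integrable_const_bound[where B=1]) auto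
  moreover have "expectation f \<le> expectation (\<lambda>x. F x + 1/n)"
    using int_f int_F F_card card_grid_below_approx(1)[OF _ _ n] f01
    by (intro integral_mono) (auto simp: algebra_simps)
  moreover have "expectation F \<le> expectation f"
    using int_f int_F F_card card_grid_below_approx(2)[OF _ _ n] f01
    by (intro integral_mono) auto
  ultimately show "expectation f - 1/n \<le> (\<Sum>j=1..n. prob {x\<in>space M. j/n \<le> f x}) / n"
    and "(\<Sum>j=1..n. prob {x\<in>space M. j/n \<le> f x}) / n \<le> expectation f"
    using int_F by (simp_all add: S_def prob_space)
qed

lemma (in prob_space) integral_le_of_superlevel_prob_le:
  fixes f g :: "'a \<Rightarrow> real"
  assumes [measurable]: "f \<in> borel_measurable M" "g \<in> borel_measurable M"
    and "\<And>x. x \<in> space M \<Longrightarrow> 0 \<le> f x \<and> f x \<le> 1"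
    and "\<And>x. x \<in> space M \<Longrightarrow> 0 \<le> g x \<and> g x \<le> 1"
    and superlevel: "\<And>c. prob {x\<in>space M. c \<le> f x} \<le> prob {x\<in>space M. c \<le> g x} + \<epsilon>"
  shows "expectation f \<le> expectation g + \<epsilon>"
proof (rule field_le_epsilon)
  fix e :: real assume "e > 0"
  then obtain m :: nat where "inverse (Suc m) < e"
    using reals_Archimedean by blast
  then obtain n :: nat where n: "n > 0" "1/n < e"
    by (metis inverse_eq_divide zero_less_Suc)
  have "expectation f - 1/n \<le> (\<Sum>j=1..n. prob {x\<in>space M. j/n \<le> f x}) / n"
    using assms n by (intro integral_superlevel_grid_bounds) auto
  also have "\<dots> \<le> (\<Sum>j=1..n. prob {x\<in>space M. j/n \<le> g x} + \<epsilon>) / n"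
    by (intro divide_right_mono sum_mono superlevel) simp
  also have "\<dots> = (\<Sum>j=1..n. prob {x\<in>space M. j/n \<le> g x}) / n + \<epsilon>"
    using n by (simp add: sum.distrib field_simps)
  also have "\<dots> \<le> expectation g + \<epsilon>"
    using assms n by (intro add_right_mono integral_superlevel_grid_bounds(2)) auto
  finally show "expectation f \<le> expectation g + \<epsilon> + e"
    using n by simp
qed

lemma TV_bounds:
  assumes "evaluation \<theta>"
  shows measure_shift_diff_le_TV:
      "Q \<in> sets (restrict_space borel {0..}) \<Longrightarrow> \<bar>measure \<theta> Q - measure \<theta> ((\<lambda>x. x + s) ` Q)\<bar> \<le> TV s \<theta>"
    and TV_nonneg: "0 \<le> TV s \<theta>"
    and TV_le_1: "TV s \<theta> \<le> 1"
proof -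
  interpret prob_space \<theta> using assms by (simp add: evaluation_def)
  have diff_le_1: "\<bar>prob A - prob B\<bar> \<le> 1" for A B
    using prob_le_1[of A] prob_le_1[of B] measure_nonneg[of \<theta> A] measure_nonneg[of \<theta> B] by linarith
  show diff_le: "\<bar>prob Q - prob ((\<lambda>x. x + s) ` Q)\<bar> \<le> TV s \<theta>"
    if "Q \<in> sets (restrict_space borel {0..})" for Q
    unfolding TV_def using that by (rule cSUP_upper) (auto intro!: bdd_aboveI[where M=1] diff_le_1)
  show "0 \<le> TV s \<theta>"
    using diff_le[of "{}"] by simp
  show "TV s \<theta> \<le> 1"
    unfolding TV_def by (intro cSUP_least) (auto intro: diff_le_1)
qed

lemma measure_le_measure_shift_preimage:
  assumes ev: "evaluation \<theta>" and t: "t \<ge> 0" and A: "A \<in> sets (restrict_space borel {0..})"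
  shows "measure \<theta> A \<le> measure \<theta> {x\<in>{0..}. x + t \<in> A} + 2 * TV t \<theta>"
proof -
  let ?R = "restrict_space borel {0::real..}"
  interpret prob_space \<theta> using ev by (simp add: evaluation_def)
  have sets_\<theta>: "sets \<theta> = sets ?R" using ev by (simp add: evaluation_def)
  define B where "B = {x\<in>{0..}. x + t \<in> A}"
  have "(\<lambda>x. x + t) \<in> ?R \<rightarrow>\<^sub>M ?R"
    using t by (intro measurable_restrict_space3) auto
  from measurable_sets[OF this A] have B: "B \<in> sets ?R"
    by (simp add: B_def vimage_def Int_def conj_commute)
  have shift_B: "(\<lambda>x. x + t) ` B = A \<inter> {t..}"
  proof (intro set_eqI iffI)
    fix y assume "y \<in> A \<inter> {t..}"
    then have "y - t \<in> B" by (simp add: B_def)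
    then show "y \<in> (\<lambda>x. x + t) ` B" by (intro image_eqI[of _ _ "y - t"]) auto
  qed (use t in \<open>auto simp: B_def\<close>)
  have shift_nonneg: "(\<lambda>x. x + t) ` {0..} = {t::real..}"
    by (force simp: image_iff intro: bexI[of _ "_ - t"])
  have events: "A \<inter> {t..} \<in> events" "{0..<t} \<in> events" "{t..} \<in> events" "{0..} \<in> events"
    using A t by (auto simp: sets_\<theta> sets_restrict_space_iff)
  have "prob A \<le> prob (A \<inter> {t..} \<union> {0..<t})"
    using events sets.sets_into_space[OF A] by (intro finite_measure_mono) auto
  also have "\<dots> \<le> prob (A \<inter> {t..}) + prob {0..<t}"
    using events by (intro measure_Un_le) auto
  also have "prob {0..<t} = prob {0..} - prob {t..}"
    using events t by (subst finite_measure_Diff[symmetric]) (auto intro: arg_cong[where f=prob])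
  also have "\<dots> \<le> TV t \<theta>"
    using measure_shift_diff_le_TV[OF ev, of "{0..}" t] shift_nonneg events by (simp add: sets_\<theta>)
  also have "prob (A \<inter> {t..}) \<le> prob B + TV t \<theta>"
    using measure_shift_diff_le_TV[OF ev B, of t] shift_B by simp
  finally show ?thesis by (simp add: B_def)
qed

lemma integral_le_integral_shift_plus_TV:
  fixes h :: "real \<Rightarrow> real"
  assumes ev: "evaluation \<theta>" and t: "t \<ge> 0" and h01: "\<And>x. 0 \<le> h x \<and> h x \<le> 1"
  shows "(\<integral>s. h s \<partial>\<theta>) \<le> (\<integral>s. h (s + t) \<partial>\<theta>) + 2 * TV t \<theta>"
proof (cases "h \<in> borel_measurable \<theta>")
  \<comment> \<open>No measurability is assumed, since the cost along \<open>traj\<close> (a definite description)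
    need not be measurable; a non-measurable h has Bochner integral 0.\<close>
  case False
  then have "(\<integral>s. h s \<partial>\<theta>) = 0"
    using borel_measurable_integrable not_integrable_integral_eq by blast
  then show ?thesis
    using h01 TV_nonneg[OF ev, of t] by (simp add: integral_nonneg)
next
  case True
  let ?R = "restrict_space borel {0::real..}"
  interpret prob_space \<theta> using ev by (simp add: evaluation_def)
  have space_\<theta>: "space \<theta> = {0..}" and sets_\<theta>: "sets \<theta> = sets ?R"
    using ev by (auto simp: evaluation_def)
  have borel_\<theta>: "(borel_measurable \<theta> :: (real \<Rightarrow> real) set) = borel_measurable ?R"
    by (rule measurable_cong_sets[OF sets_\<theta> refl])
  have h_R [measurable]: "h \<in> borel_measurable ?R"
    using True borel_\<theta> by simp
  have "(\<lambda>x. x + t) \<in> ?R \<rightarrow>\<^sub>M ?R"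
    using t by (intro measurable_restrict_space3) auto
  from measurable_compose[OF this h_R] have "(\<lambda>s. h (s + t)) \<in> borel_measurable \<theta>"
    using borel_\<theta> by (simp add: comp_def)
  then show ?thesis
  proof (rule integral_le_of_superlevel_prob_le[OF True])
    fix c
    define A where "A = {x\<in>space ?R. c \<le> h x}"
    have "A \<in> sets ?R" unfolding A_def by measurable
    then have "prob A \<le> prob {x\<in>{0..}. x + t \<in> A} + 2 * TV t \<theta>"
      by (rule measure_le_measure_shift_preimage[OF ev t])
    moreover have "{x\<in>space \<theta>. c \<le> h x} = A"
      by (simp add: A_def space_\<theta>)
    moreover have "{x\<in>space \<theta>. c \<le> h (x + t)} = {x\<in>{0..}. x + t \<in> A}"
      using t by (auto simp: A_def space_\<theta>)
    ultimately show "prob {x\<in>space \<theta>. c \<le> h x} \<le> prob {x\<in>space \<theta>. c \<le> h (x + t)} + 2 * TV t \<theta>"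
      by simp
  qed (use h01 in auto)
qed

lemma controls_nonempty: "controls \<noteq> {}"
proof -
  have "(\<lambda>_. undefined) \<in> controls" by (simp add: controls_def)
  then show ?thesis by blast
qed

lemma Val_shift_zero: "Val_shift g f \<theta> 0 y0 = Val g f \<theta> y0"
  by (simp add: Val_shift_def Val_def)

lemma Val_shift_nonneg:
  fixes g :: "'a::euclidean_space \<Rightarrow> 'u::metric_space \<Rightarrow> real" and f :: "'a \<Rightarrow> 'u \<Rightarrow> 'a"
  assumes "\<And>y u. 0 \<le> g y u"
  shows "0 \<le> Val_shift g f \<theta> t y0"
  unfolding Val_shift_def using assms controls_nonempty by (intro cINF_greatest) auto

lemma Val_le_Val_shift_plus_TV:
  fixes g :: "'a::euclidean_space \<Rightarrow> 'u::metric_space \<Rightarrow> real" and f :: "'a \<Rightarrow> 'u \<Rightarrow> 'a"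
  assumes g01: "\<And>y u. 0 \<le> g y u \<and> g y u \<le> 1" and ev: "evaluation \<theta>" and t: "t \<ge> 0"
  shows "Val g f \<theta> y0 \<le> Val_shift g f \<theta> t y0 + 2 * TV t \<theta>"
proof -
  have "Val g f \<theta> y0 - 2 * TV t \<theta> \<le> Val_shift g f \<theta> t y0"
    unfolding Val_shift_def
  proof (rule cINF_greatest[OF controls_nonempty])
    fix u :: "real \<Rightarrow> 'u" assume u: "u \<in> controls"
    have "Val g f \<theta> y0 \<le> (\<integral>s. g (traj f u y0 s) (u s) \<partial>\<theta>)"
      unfolding Val_def using u g01 by (intro cINF_lower) (auto intro!: bdd_belowI[where m=0])
    also have "\<dots> \<le> (\<integral>s. g (traj f u y0 (s + t)) (u (s + t)) \<partial>\<theta>) + 2 * TV t \<theta>"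
      using integral_le_integral_shift_plus_TV[OF ev t, of "\<lambda>s. g (traj f u y0 s) (u s)"] g01 by simp
    finally show "Val g f \<theta> y0 - 2 * TV t \<theta> \<le> (\<integral>s. g (traj f u y0 (s + t)) (u (s + t)) \<partial>\<theta>)"
      by simp
  qed
  then show ?thesis by simp
qed

lemma INF_Val_shift_le_Val:
  fixes g :: "'a::euclidean_space \<Rightarrow> 'u::metric_space \<Rightarrow> real" and f :: "'a \<Rightarrow> 'u \<Rightarrow> 'a"
  assumes "\<And>y u. 0 \<le> g y u" and "T \<ge> 0"
  shows "(INF t\<in>{0..T}. Val_shift g f \<theta> t y0) \<le> Val g f \<theta> y0"
proof -
  have "(INF t\<in>{0..T}. Val_shift g f \<theta> t y0) \<le> Val_shift g f \<theta> 0 y0"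
    using assms Val_shift_nonneg[OF assms(1)] by (intro cINF_lower) (auto intro!: bdd_belowI[where m=0])
  then show ?thesis by (simp add: Val_shift_zero)
qed

lemma Val_le_INF_Val_shift_plus_TV:
  fixes g :: "'a::euclidean_space \<Rightarrow> 'u::metric_space \<Rightarrow> real" and f :: "'a \<Rightarrow> 'u \<Rightarrow> 'a"
  assumes "\<And>y u. 0 \<le> g y u \<and> g y u \<le> 1" and ev: "evaluation \<theta>" and "0 \<le> T" "T \<le> S"
  shows "Val g f \<theta> y0 \<le> (INF t\<in>{0..T}. Val_shift g f \<theta> t y0) + 2 * (SUP s\<in>{0..S}. TV s \<theta>)"
proof -
  have "Val g f \<theta> y0 - 2 * (SUP s\<in>{0..S}. TV s \<theta>) \<le> Val_shift g f \<theta> t y0" if t: "t \<in> {0..T}" for t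
  proof -
    have "TV t \<theta> \<le> (SUP s\<in>{0..S}. TV s \<theta>)"
      using t assms TV_le_1[OF ev] by (intro cSUP_upper) (auto intro!: bdd_aboveI[where M=1])
    moreover have "Val g f \<theta> y0 \<le> Val_shift g f \<theta> t y0 + 2 * TV t \<theta>"
      using t by (intro Val_le_Val_shift_plus_TV[OF assms(1) ev]) auto
    ultimately show ?thesis by linarith
  qed
  then have "Val g f \<theta> y0 - 2 * (SUP s\<in>{0..S}. TV s \<theta>) \<le> (INF t\<in>{0..T}. Val_shift g f \<theta> t y0)"
    using \<open>0 \<le> T\<close> by (intro cINF_greatest) auto
  then show ?thesis by simp
qed

lemma limsup_eq_if_gap_vanishes:
  fixes a b e :: "nat \<Rightarrow> real"
  assumes "\<And>k. b k \<le> a k" and "eventually (\<lambda>k. a k \<le> b k + e k) sequentially" and "e \<longlonglongrightarrow> 0"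
  shows "limsup (\<lambda>k. ereal (a k)) = limsup (\<lambda>k. ereal (b k))"
proof (rule antisym)
  have "limsup (\<lambda>k. ereal (e k)) = 0"
    using assms(3) by (intro lim_imp_Limsup) (auto simp: zero_ereal_def lim_ereal)
  moreover have "limsup (\<lambda>k. ereal (a k)) \<le> limsup (\<lambda>k. ereal (b k) + ereal (e k))"
    using assms(2) by (intro Limsup_mono) (auto elim: eventually_mono)
  ultimately show "limsup (\<lambda>k. ereal (a k)) \<le> limsup (\<lambda>k. ereal (b k))"
    using ereal_limsup_add_mono[of "\<lambda>k. ereal (b k)" "\<lambda>k. ereal (e k)"] by simp
  show "limsup (\<lambda>k. ereal (b k)) \<le> limsup (\<lambda>k. ereal (a k))"
    using assms(1) by (intro Limsup_mono) auto
qed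

theorem mainTheorem12:
  fixes g :: "'a::euclidean_space \<Rightarrow> 'u::metric_space \<Rightarrow> real"
    and f :: "'a \<Rightarrow> 'u \<Rightarrow> 'a"
    and L a :: real
    and \<theta> :: "nat \<Rightarrow> real measure"
  assumes "standing_assumptions g f L a"
    and "\<And>k. k \<ge> 1 \<Longrightarrow> evaluation (\<theta> k)"
    and "long_term_condition \<theta>"
  shows "\<forall>T0\<ge>0. \<forall>y0.
      limsup (\<lambda>k. ereal (Val g f (\<theta> k) y0))
        = limsup (\<lambda>k. ereal (INF t\<in>{0..T0}. Val_shift g f (\<theta> k) t y0))
    \<and> limsup (\<lambda>k. ereal (Val g f (\<theta> k) y0))
        \<le> (SUP k\<in>{1..}. ereal (INF t\<in>{0..T0}. Val_shift g f (\<theta> k) t y0))"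
proof (intro allI impI)
  fix T0 :: real and y0 :: 'a
  assume T0: "T0 \<ge> 0"
  have g01: "\<And>y u. 0 \<le> g y u \<and> g y u \<le> 1"
    using assms(1) by (simp add: standing_assumptions_def)
  \<comment> \<open>The long-term condition is only available on windows of positive length.\<close>
  have "(\<lambda>k. SUP s\<in>{0..T0 + 1}. TV s (\<theta> k)) \<longlonglongrightarrow> 0"
    using assms(3) T0 by (simp add: long_term_condition_def)
  then have gap: "(\<lambda>k. 2 * (SUP s\<in>{0..T0 + 1}. TV s (\<theta> k))) \<longlonglongrightarrow> 0"
    by (rule tendsto_mult_right_zero)
  have "limsup (\<lambda>k. ereal (Val g f (\<theta> k) y0))
      = limsup (\<lambda>k. ereal (INF t\<in>{0..T0}. Val_shift g f (\<theta> k) t y0))"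
  proof (rule limsup_eq_if_gap_vanishes[OF _ _ gap])
    show "(INF t\<in>{0..T0}. Val_shift g f (\<theta> k) t y0) \<le> Val g f (\<theta> k) y0" for k
      using g01 T0 by (intro INF_Val_shift_le_Val) auto
    show "\<forall>\<^sub>F k in sequentially. Val g f (\<theta> k) y0
        \<le> (INF t\<in>{0..T0}. Val_shift g f (\<theta> k) t y0) + 2 * (SUP s\<in>{0..T0 + 1}. TV s (\<theta> k))"
      using eventually_ge_at_top[of 1]
      by eventually_elim (use g01 assms(2) T0 in \<open>auto intro: Val_le_INF_Val_shift_plus_TV\<close>)
  qed
  moreover have "limsup (\<lambda>k. ereal (INF t\<in>{0..T0}. Val_shift g f (\<theta> k) t y0))
      \<le> (SUP k\<in>{1..}. ereal (INF t\<in>{0..T0}. Val_shift g f (\<theta> k) t y0))"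
    unfolding limsup_INF_SUP by (rule INF_lower2[of 1]) auto
  ultimately show "limsup (\<lambda>k. ereal (Val g f (\<theta> k) y0))
        = limsup (\<lambda>k. ereal (INF t\<in>{0..T0}. Val_shift g f (\<theta> k) t y0))
    \<and> limsup (\<lambda>k. ereal (Val g f (\<theta> k) y0))
        \<le> (SUP k\<in>{1..}. ereal (INF t\<in>{0..T0}. Val_shift g f (\<theta> k) t y0))"
    by simp
qed

end
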